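(* In the calculus $\lambda^{MD}$, if $\Gamma\vdash M_1:\tau@A$, then there is no infinite sequence $(M_i)_{i\ge1}$ of terms such that $M_i\longrightarrow M_{i+1}$ for all $i\ge1$, where $\longrightarrow$ is full reduction.
   Context: The calculus $\lambda^{MD}$. Fix countably infinite, pairwise disjoint sets of type-level constants ($X$), variables ($x,y,z$), constants ($c$) and stage variables ($\alpha,\beta,\gamma$). A stage ($A,B,C$) is a finite sequence of stage variables, $\varepsilon$ is the empty stage, and juxtaposition ($A\alpha$, $AB$) denotes concatenation. Kinds, types, terms, signatures and type environments are: $K ::= * \mid \Pi x{:}\tau.K$; $\tau,\sigma ::= X \mid \Pi x{:}\tau.\sigma \mid \tau\,M \mid \triangleright_\alpha\tau \mid \forall\alpha.\tau$; $M,N ::= c \mid x \mid \lambda x{:}\tau.M \mid M\,N \mid \blacktriangleright_\alpha M \mid \blacktriangleleft_\alpha M \mid \Lambda\alpha.M \mid M\,A \mid \%_\alpha M$; $\Sigma ::= \emptyset \mid \Sigma, X{::}K \mid \Sigma, c{:}\tau$; $\Gamma ::= \emptyset \mid \Gamma, x{:}\tau@A$. ($\blacktriangleright_\alpha M$ is quotation, $\blacktriangleleft_\alpha M$ escape, $M\,A$ applies a term to a stage, $\%_\alpha M$ is cross-stage persistence, $\triangleright_\alpha\tau$ is a code type.) $\lambda,\Pi$ bind $x$; $\Lambda,\forall$ bind $\alpha$; syntax is identified up to renaming of bound (stage) variables; $\mathrm{FTV}(\cdot)$ is the set of free stage variables. $M[x\mapsto N]$ (and its extension to types, kinds and type environments)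 is capture-avoiding substitution. Stage substitution $[\alpha\mapsto A]$ replaces free occurrences of $\alpha$ in stages by the sequence $A$, acting homomorphically on terms, types, kinds and environments, with $(\blacktriangleright_\beta M)[\alpha\mapsto A]=\blacktriangleright_{\beta[\alpha\mapsto A]}(M[\alpha\mapsto A])$ and likewise for $\blacktriangleleft,\%,\triangleright$, where $\blacktriangleright_{\alpha_1\cdots\alpha_n}M=\blacktriangleright_{\alpha_1}\cdots\blacktriangleright_{\alpha_n}M$, $\triangleright_{\alpha_1\cdots\alpha_n}\tau=\triangleright_{\alpha_1}\cdots\triangleright_{\alpha_n}\tau$, $\blacktriangleleft_{\alpha_1\cdots\alpha_n}M=\blacktriangleleft_{\alpha_n}\cdots\blacktriangleleft_{\alpha_1}M$, $\%_{\alpha_1\cdots\alpha_n}M=\%_{\alpha_n}\cdots\%_{\alpha_1}M$ (just $M$, resp. $\tau$, when $n=0$). Full reduction $\longrightarrow$ is the least relation on terms that is closed under all term-forming constructs (reduction may occur anywhere, including under $\lambda$, $\Lambda$, $\blacktriangleright_\alpha$, $\blacktriangleleft_\alpha$, $\%_\alpha$) and contains $(\lambda x{:}\tau.M)\,N\longrightarrow M[x\mapsto N]$, $\blacktriangleleft_\alpha\blacktriangleright_\alpha M\longrightarrow M$, and $(\Lambda\alpha.M)\,A\longrightarrow M[\alpha\mapsto A]$. Type system. Relative to a fixed signature $\Sigma$, the judgments $\vdash\Sigma$, $\vdash\Gamma$, $\Gamma\vdash K\ \mathrm{kind}@A$, $\Gamma\vdash\tau::K@A$, $\Gamma\vdash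 M:\tau@A$, $\Gamma\vdash K\equiv J@A$, $\Gamma\vdash\tau\equiv\sigma::K@A$, $\Gamma\vdash M\equiv N:\tau@A$ are defined simultaneously by the following rules; signatures and environments are assumed well formed throughout. Well-formedness: $\vdash\emptyset$; from $\vdash\Sigma$, $\emptyset\vdash K\ \mathrm{kind}@\varepsilon$, $X\notin dom(\Sigma)$ infer $\vdash\Sigma,X{::}K$; from $\vdash\Sigma$, $\emptyset\vdash\tau::*@\varepsilon$, $c\notin dom(\Sigma)$ infer $\vdash\Sigma,c{:}\tau$; $\vdash\emptyset$; from $\vdash\Gamma$, $\Gamma\vdash\tau::*@A$, $x$ not declared in $\Gamma$ infer $\vdash\Gamma,x{:}\tau@A$. Kinds: $\Gamma\vdash *\ \mathrm{kind}@A$; if $\Gamma\vdash\tau::*@A$ and $\Gamma,x{:}\tau@A\vdash K\ \mathrm{kind}@A$ then $\Gamma\vdash\Pi x{:}\tau.K\ \mathrm{kind}@A$. Kinding: if $X{::}K\in\Sigma$ then $\Gamma\vdash X::K@A$; if $\Gamma\vdash\tau::*@A$ and $\Gamma,x{:}\tau@A\vdash\sigma::*@A$ then $\Gamma\vdash\Pi x{:}\tau.\sigma::*@A$; if $\Gamma\vdash\sigma::\Pi x{:}\tau.K@A$ and $\Gamma\vdash M:\tau@A$ then $\Gamma\vdash\sigma\,M::K[x\mapsto M]@A$; if $\Gamma\vdash\tau::K@A$ and $\Gamma\vdash K\equiv J@A$ then $\Gamma\vdash\tau::J@A$; if $\Gamma\vdash\tau::*@A\alpha$ then $\Gamma\vdash\triangleright_\alpha\tau::*@A$;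 if $\Gamma\vdash\tau::K@A$ and $\alpha\notin\mathrm{FTV}(\Gamma)\cup\mathrm{FTV}(A)$ then $\Gamma\vdash\forall\alpha.\tau::K@A$; if $\Gamma\vdash\tau::*@A$ then $\Gamma\vdash\tau::*@A\alpha$. Typing: if $c{:}\tau\in\Sigma$ then $\Gamma\vdash c:\tau@A$ (any $A$); if $x{:}\tau@A\in\Gamma$ then $\Gamma\vdash x:\tau@A$; if $\Gamma\vdash\sigma::*@A$ and $\Gamma,x{:}\sigma@A\vdash M:\tau@A$ then $\Gamma\vdash\lambda x{:}\sigma.M:\Pi x{:}\sigma.\tau@A$; if $\Gamma\vdash M:\Pi x{:}\sigma.\tau@A$ and $\Gamma\vdash N:\sigma@A$ then $\Gamma\vdash M\,N:\tau[x\mapsto N]@A$; if $\Gamma\vdash M:\tau@A$ and $\Gamma\vdash\tau\equiv\sigma::K@A$ then $\Gamma\vdash M:\sigma@A$; if $\Gamma\vdash M:\tau@A\alpha$ then $\Gamma\vdash\blacktriangleright_\alpha M:\triangleright_\alpha\tau@A$; if $\Gamma\vdash M:\triangleright_\alpha\tau@A$ then $\Gamma\vdash\blacktriangleleft_\alpha M:\tau@A\alpha$; if $\Gamma\vdash M:\tau@A$ and $\alpha\notin\mathrm{FTV}(\Gamma)\cup\mathrm{FTV}(A)$ then $\Gamma\vdash\Lambda\alpha.M:\forall\alpha.\tau@A$; if $\Gamma\vdash M:\forall\alpha.\tau@A$ then $\Gamma\vdash M\,B:\tau[\alpha\mapsto B]@A$; if $\Gamma\vdash M:\tau@A$ then $\Gamma\vdash\%_\alpha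 M:\tau@A\alpha$. Equivalences: each equivalence judgment is reflexive (on well-formed kinds, kinded types, typed terms), symmetric and transitive. Kinds: $\Gamma\vdash\tau\equiv\sigma::*@A$ and $\Gamma,x{:}\tau@A\vdash K\equiv J@A$ give $\Gamma\vdash\Pi x{:}\tau.K\equiv\Pi x{:}\sigma.J@A$; $\Gamma\vdash K\equiv J@A$ gives $\Gamma\vdash K\equiv J@A\alpha$. Types: $\Gamma\vdash\tau\equiv\sigma::*@A$ and $\Gamma,x{:}\tau@A\vdash\rho\equiv\pi::*@A$ give $\Gamma\vdash\Pi x{:}\tau.\rho\equiv\Pi x{:}\sigma.\pi::*@A$; $\Gamma\vdash\tau\equiv\sigma::\Pi x{:}\rho.K@A$ and $\Gamma\vdash M\equiv N:\rho@A$ give $\Gamma\vdash\tau\,M\equiv\sigma\,N::K[x\mapsto M]@A$; $\Gamma\vdash\tau\equiv\sigma::*@A\alpha$ gives $\Gamma\vdash\triangleright_\alpha\tau\equiv\triangleright_\alpha\sigma::*@A$; $\Gamma\vdash\tau\equiv\sigma::*@A$ with $\alpha\notin\mathrm{FTV}(\Gamma)\cup\mathrm{FTV}(A)$ gives $\Gamma\vdash\forall\alpha.\tau\equiv\forall\alpha.\sigma::*@A$; $\Gamma\vdash\tau\equiv\sigma::*@A$ gives $\Gamma\vdash\tau\equiv\sigma::*@A\alpha$. Terms: congruence rules mirroring the typing rules for $\lambda$ ($\Gamma\vdash\tau\equiv\sigma::*@A$ and $\Gamma,x{:}\tau@A\vdash M\equiv N:\rho@A$ give $\Gamma\vdash\lambda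 x{:}\tau.M\equiv\lambda x{:}\sigma.N:\Pi x{:}\tau.\rho@A$), application, $\blacktriangleright_\alpha$, $\blacktriangleleft_\alpha$, $\Lambda\alpha$ (same side condition), stage application ($\Gamma\vdash M\equiv N:\forall\alpha.\tau@A$ gives $\Gamma\vdash M\,B\equiv N\,B:\tau[\alpha\mapsto B]@A$) and $\%_\alpha$; and the axioms: if $\Gamma,x{:}\sigma@A\vdash M:\tau@A$ and $\Gamma\vdash N:\sigma@A$ then $\Gamma\vdash(\lambda x{:}\sigma.M)\,N\equiv M[x\mapsto N]:\tau[x\mapsto N]@A$; if $\Gamma\vdash M\equiv N:\tau@A$ then $\Gamma\vdash\blacktriangleleft_\alpha\blacktriangleright_\alpha M\equiv N:\tau@A$; if $\Gamma\vdash\Lambda\alpha.M:\forall\alpha.\tau@A$ then $\Gamma\vdash(\Lambda\alpha.M)\,\varepsilon\equiv M[\alpha\mapsto\varepsilon]:\tau[\alpha\mapsto\varepsilon]@A$; if $\Gamma\vdash M:\tau@A\alpha$ and $\Gamma\vdash M:\tau@A$ then $\Gamma\vdash\%_\alpha M\equiv M:\tau@A\alpha$. *)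

theory Defs
  imports Main
begin

text \<open>Term variables and stage variables are both represented by de Bruijn
indices (two independent index spaces).  lambda and Pi bind term index 0;
Lambda and forall bind stage index 0.  A stage is a list of stage variables,
the empty list is epsilon and stage concatenation is list append.\<close>

type_synonym stage = "nat list"

datatype ty =
    TConst nat
  | TPi ty ty             \<comment> \<open>Pi x:tau. sigma  (sigma under the binder)\<close>
  | TApp ty trm
  | TCode nat ty
  | TAll ty
and trm =
    Const nat
  | Var nat
  | Lam ty trm
  | App trm trm
  | Quote nat trm
  | Esc nat trm
  | SLam trm
  | SApp trm stage
  | CSP nat trm           \<comment> \<open>cross-stage persistence, percent_alpha M\<close>

datatype kind = Star | KPi ty kind

datatype sig_entry = SType nat kind | SConst nat ty

type_synonym signature = "sig_entry list"   \<comment> \<open>head = most recent declaration\<close>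
type_synonym env = "(ty \<times> stage) list"      \<comment> \<open>head = most recent declaration (index 0)\<close>

definition quotes :: "stage \<Rightarrow> trm \<Rightarrow> trm" where
  "quotes A M = foldr Quote A M"
definition codes :: "stage \<Rightarrow> ty \<Rightarrow> ty" where
  "codes A t = foldr TCode A t"
definition escs :: "stage \<Rightarrow> trm \<Rightarrow> trm" where
  "escs A M = foldl (\<lambda>N a. Esc a N) M A"    \<comment> \<open>Esc an (... (Esc a1 M))\<close>
definition csps :: "stage \<Rightarrow> trm \<Rightarrow> trm" where
  "csps A M = foldl (\<lambda>N a. CSP a N) M A"

definition shv :: "nat \<Rightarrow> nat \<Rightarrow> nat" where
  "shv k i = (if i < k then i else Suc i)"

definition ssv :: "nat \<Rightarrow> stage \<Rightarrow> nat \<Rightarrow> stage" where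
  "ssv k A i = (if i < k then [i] else if i = k then A else [i - 1])"

definition ssubst_stage :: "nat \<Rightarrow> stage \<Rightarrow> stage \<Rightarrow> stage" where
  "ssubst_stage k A B = concat (map (ssv k A) B)"

primrec sshift_ty :: "nat \<Rightarrow> ty \<Rightarrow> ty" and sshift_tm :: "nat \<Rightarrow> trm \<Rightarrow> trm" where
  "sshift_ty k (TConst X) = TConst X"
| "sshift_ty k (TPi t s) = TPi (sshift_ty k t) (sshift_ty k s)"
| "sshift_ty k (TApp t M) = TApp (sshift_ty k t) (sshift_tm k M)"
| "sshift_ty k (TCode a t) = TCode (shv k a) (sshift_ty k t)"
| "sshift_ty k (TAll t) = TAll (sshift_ty (Suc k) t)"
| "sshift_tm k (Const c) = Const c"
| "sshift_tm k (Var x) = Var x"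
| "sshift_tm k (Lam t M) = Lam (sshift_ty k t) (sshift_tm k M)"
| "sshift_tm k (App M N) = App (sshift_tm k M) (sshift_tm k N)"
| "sshift_tm k (Quote a M) = Quote (shv k a) (sshift_tm k M)"
| "sshift_tm k (Esc a M) = Esc (shv k a) (sshift_tm k M)"
| "sshift_tm k (SLam M) = SLam (sshift_tm (Suc k) M)"
| "sshift_tm k (SApp M A) = SApp (sshift_tm k M) (map (shv k) A)"
| "sshift_tm k (CSP a M) = CSP (shv k a) (sshift_tm k M)"

primrec sshift_kind :: "nat \<Rightarrow> kind \<Rightarrow> kind" where
  "sshift_kind k Star = Star"
| "sshift_kind k (KPi t K) = KPi (sshift_ty k t) (sshift_kind k K)"

definition sshift_env :: "env \<Rightarrow> env" where
  "sshift_env G = map (\<lambda>(t, B). (sshift_ty 0 t, map (shv 0) B)) G"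

primrec ssubst_ty :: "nat \<Rightarrow> stage \<Rightarrow> ty \<Rightarrow> ty" and ssubst_tm :: "nat \<Rightarrow> stage \<Rightarrow> trm \<Rightarrow> trm" where
  "ssubst_ty k A (TConst X) = TConst X"
| "ssubst_ty k A (TPi t s) = TPi (ssubst_ty k A t) (ssubst_ty k A s)"
| "ssubst_ty k A (TApp t M) = TApp (ssubst_ty k A t) (ssubst_tm k A M)"
| "ssubst_ty k A (TCode a t) = codes (ssv k A a) (ssubst_ty k A t)"
| "ssubst_ty k A (TAll t) = TAll (ssubst_ty (Suc k) (map (shv 0) A) t)"
| "ssubst_tm k A (Const c) = Const c"
| "ssubst_tm k A (Var x) = Var x"
| "ssubst_tm k A (Lam t M) = Lam (ssubst_ty k A t) (ssubst_tm k A M)"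
| "ssubst_tm k A (App M N) = App (ssubst_tm k A M) (ssubst_tm k A N)"
| "ssubst_tm k A (Quote a M) = quotes (ssv k A a) (ssubst_tm k A M)"
| "ssubst_tm k A (Esc a M) = escs (ssv k A a) (ssubst_tm k A M)"
| "ssubst_tm k A (SLam M) = SLam (ssubst_tm (Suc k) (map (shv 0) A) M)"
| "ssubst_tm k A (SApp M B) = SApp (ssubst_tm k A M) (ssubst_stage k A B)"
| "ssubst_tm k A (CSP a M) = csps (ssv k A a) (ssubst_tm k A M)"

primrec ssubst_kind :: "nat \<Rightarrow> stage \<Rightarrow> kind \<Rightarrow> kind" where
  "ssubst_kind k A Star = Star"
| "ssubst_kind k A (KPi t K) = KPi (ssubst_ty k A t) (ssubst_kind k A K)"

definition unbind :: "nat set \<Rightarrow> nat set" where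
  "unbind S = {i. Suc i \<in> S}"

primrec fsv_ty :: "ty \<Rightarrow> nat set" and fsv_tm :: "trm \<Rightarrow> nat set" where
  "fsv_ty (TConst X) = {}"
| "fsv_ty (TPi t s) = fsv_ty t \<union> fsv_ty s"
| "fsv_ty (TApp t M) = fsv_ty t \<union> fsv_tm M"
| "fsv_ty (TCode a t) = insert a (fsv_ty t)"
| "fsv_ty (TAll t) = unbind (fsv_ty t)"
| "fsv_tm (Const c) = {}"
| "fsv_tm (Var x) = {}"
| "fsv_tm (Lam t M) = fsv_ty t \<union> fsv_tm M"
| "fsv_tm (App M N) = fsv_tm M \<union> fsv_tm N"
| "fsv_tm (Quote a M) = insert a (fsv_tm M)"
| "fsv_tm (Esc a M) = insert a (fsv_tm M)"
| "fsv_tm (SLam M) = unbind (fsv_tm M)"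
| "fsv_tm (SApp M A) = fsv_tm M \<union> set A"
| "fsv_tm (CSP a M) = insert a (fsv_tm M)"

primrec fsv_kind :: "kind \<Rightarrow> nat set" where
  "fsv_kind Star = {}"
| "fsv_kind (KPi t K) = fsv_ty t \<union> fsv_kind K"

definition fsv_env :: "env \<Rightarrow> nat set" where
  "fsv_env G = (\<Union>(t, B) \<in> set G. fsv_ty t \<union> set B)"

primrec lift_ty :: "nat \<Rightarrow> nat \<Rightarrow> ty \<Rightarrow> ty" and lift_tm :: "nat \<Rightarrow> nat \<Rightarrow> trm \<Rightarrow> trm" where
  "lift_ty d k (TConst X) = TConst X"
| "lift_ty d k (TPi t s) = TPi (lift_ty d k t) (lift_ty d (Suc k) s)"
| "lift_ty d k (TApp t M) = TApp (lift_ty d k t) (lift_tm d k M)"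
| "lift_ty d k (TCode a t) = TCode a (lift_ty d k t)"
| "lift_ty d k (TAll t) = TAll (lift_ty d k t)"
| "lift_tm d k (Const c) = Const c"
| "lift_tm d k (Var x) = Var (if x < k then x else x + d)"
| "lift_tm d k (Lam t M) = Lam (lift_ty d k t) (lift_tm d (Suc k) M)"
| "lift_tm d k (App M N) = App (lift_tm d k M) (lift_tm d k N)"
| "lift_tm d k (Quote a M) = Quote a (lift_tm d k M)"
| "lift_tm d k (Esc a M) = Esc a (lift_tm d k M)"
| "lift_tm d k (SLam M) = SLam (lift_tm d k M)"
| "lift_tm d k (SApp M A) = SApp (lift_tm d k M) A"
| "lift_tm d k (CSP a M) = CSP a (lift_tm d k M)"

primrec subst_ty :: "nat \<Rightarrow> trm \<Rightarrow> ty \<Rightarrow> ty" and subst_tm :: "nat \<Rightarrow> trm \<Rightarrow> trm \<Rightarrow> trm" where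
  "subst_ty k N (TConst X) = TConst X"
| "subst_ty k N (TPi t s) = TPi (subst_ty k N t) (subst_ty (Suc k) N s)"
| "subst_ty k N (TApp t M) = TApp (subst_ty k N t) (subst_tm k N M)"
| "subst_ty k N (TCode a t) = TCode a (subst_ty k N t)"
| "subst_ty k N (TAll t) = TAll (subst_ty k (sshift_tm 0 N) t)"
| "subst_tm k N (Const c) = Const c"
| "subst_tm k N (Var x) = (if x < k then Var x else if x = k then lift_tm k 0 N else Var (x - 1))"
| "subst_tm k N (Lam t M) = Lam (subst_ty k N t) (subst_tm (Suc k) N M)"
| "subst_tm k N (App M P) = App (subst_tm k N M) (subst_tm k N P)"
| "subst_tm k N (Quote a M) = Quote a (subst_tm k N M)"
| "subst_tm k N (Esc a M) = Esc a (subst_tm k N M)"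
| "subst_tm k N (SLam M) = SLam (subst_tm k (sshift_tm 0 N) M)"
| "subst_tm k N (SApp M A) = SApp (subst_tm k N M) A"
| "subst_tm k N (CSP a M) = CSP a (subst_tm k N M)"

primrec subst_kind :: "nat \<Rightarrow> trm \<Rightarrow> kind \<Rightarrow> kind" where
  "subst_kind k N Star = Star"
| "subst_kind k N (KPi t K) = KPi (subst_ty k N t) (subst_kind (Suc k) N K)"

inductive red :: "trm \<Rightarrow> trm \<Rightarrow> bool" where
  beta: "red (App (Lam t M) N) (subst_tm 0 N M)"
| esc_quote: "red (Esc a (Quote a M)) M"
| sbeta: "red (SApp (SLam M) A) (ssubst_tm 0 A M)"
| lam: "red M M' \<Longrightarrow> red (Lam t M) (Lam t M')"
| app1: "red M M' \<Longrightarrow> red (App M N) (App M' N)"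
| app2: "red N N' \<Longrightarrow> red (App M N) (App M N')"
| quote: "red M M' \<Longrightarrow> red (Quote a M) (Quote a M')"
| esc: "red M M' \<Longrightarrow> red (Esc a M) (Esc a M')"
| slam: "red M M' \<Longrightarrow> red (SLam M) (SLam M')"
| sapp: "red M M' \<Longrightarrow> red (SApp M A) (SApp M' A)"
| csp: "red M M' \<Longrightarrow> red (CSP a M) (CSP a M')"

inductive
  kwf :: "signature \<Rightarrow> env \<Rightarrow> kind \<Rightarrow> stage \<Rightarrow> bool"
  and kinding :: "signature \<Rightarrow> env \<Rightarrow> ty \<Rightarrow> kind \<Rightarrow> stage \<Rightarrow> bool"
  and typing :: "signature \<Rightarrow> env \<Rightarrow> trm \<Rightarrow> ty \<Rightarrow> stage \<Rightarrow> bool"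
  and keq :: "signature \<Rightarrow> env \<Rightarrow> kind \<Rightarrow> kind \<Rightarrow> stage \<Rightarrow> bool"
  and tyeq :: "signature \<Rightarrow> env \<Rightarrow> ty \<Rightarrow> ty \<Rightarrow> kind \<Rightarrow> stage \<Rightarrow> bool"
  and tmeq :: "signature \<Rightarrow> env \<Rightarrow> trm \<Rightarrow> trm \<Rightarrow> ty \<Rightarrow> stage \<Rightarrow> bool"
  for S :: signature
where
  kwf_star: "kwf S G Star A"
| kwf_pi: "kinding S G t Star A \<Longrightarrow> kwf S ((t, A) # G) K A \<Longrightarrow> kwf S G (KPi t K) A"
| k_const: "SType X K \<in> set S \<Longrightarrow> kinding S G (TConst X) K A"
| k_pi: "kinding S G t Star A \<Longrightarrow> kinding S ((t, A) # G) s Star A \<Longrightarrow> kinding S G (TPi t s) Star A"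
| k_app: "kinding S G s (KPi t K) A \<Longrightarrow> typing S G M t A \<Longrightarrow> kinding S G (TApp s M) (subst_kind 0 M K) A"
| k_conv: "kinding S G t K A \<Longrightarrow> keq S G K J A \<Longrightarrow> kinding S G t J A"
| k_code: "kinding S G t Star (A @ [a]) \<Longrightarrow> kinding S G (TCode a t) Star A"
| k_all: "kinding S (sshift_env G) t K' (map (shv 0) A) \<Longrightarrow> j \<notin> fsv_env G \<Longrightarrow> j \<notin> set A
          \<Longrightarrow> Suc j \<notin> fsv_kind K' \<Longrightarrow> kinding S G (TAll t) (ssubst_kind 0 [j] K') A"
| k_stage: "kinding S G t Star A \<Longrightarrow> kinding S G t Star (A @ [a])"
| t_const: "SConst c t \<in> set S \<Longrightarrow> typing S G (Const c) t A"
| t_var: "x < length G \<Longrightarrow> G ! x = (t, A) \<Longrightarrow> typing S G (Var x) (lift_ty (Suc x) 0 t) A"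
| t_lam: "kinding S G s Star A \<Longrightarrow> typing S ((s, A) # G) M t A \<Longrightarrow> typing S G (Lam s M) (TPi s t) A"
| t_app: "typing S G M (TPi s t) A \<Longrightarrow> typing S G N s A \<Longrightarrow> typing S G (App M N) (subst_ty 0 N t) A"
| t_conv: "typing S G M t A \<Longrightarrow> tyeq S G t s K A \<Longrightarrow> typing S G M s A"
| t_quote: "typing S G M t (A @ [a]) \<Longrightarrow> typing S G (Quote a M) (TCode a t) A"
| t_esc: "typing S G M (TCode a t) A \<Longrightarrow> typing S G (Esc a M) t (A @ [a])"
| t_slam: "typing S (sshift_env G) M t (map (shv 0) A) \<Longrightarrow> typing S G (SLam M) (TAll t) A"
| t_sapp: "typing S G M (TAll t) A \<Longrightarrow> typing S G (SApp M B) (ssubst_ty 0 B t) A"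
| t_csp: "typing S G M t A \<Longrightarrow> typing S G (CSP a M) t (A @ [a])"
| keq_refl: "kwf S G K A \<Longrightarrow> keq S G K K A"
| keq_sym: "keq S G K J A \<Longrightarrow> keq S G J K A"
| keq_trans: "keq S G K J A \<Longrightarrow> keq S G J L A \<Longrightarrow> keq S G K L A"
| keq_pi: "tyeq S G t s Star A \<Longrightarrow> keq S ((t, A) # G) K J A \<Longrightarrow> keq S G (KPi t K) (KPi s J) A"
| keq_stage: "keq S G K J A \<Longrightarrow> keq S G K J (A @ [a])"
| tyeq_refl: "kinding S G t K A \<Longrightarrow> tyeq S G t t K A"
| tyeq_sym: "tyeq S G t s K A \<Longrightarrow> tyeq S G s t K A"
| tyeq_trans: "tyeq S G t s K A \<Longrightarrow> tyeq S G s r K A \<Longrightarrow> tyeq S G t r K A"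
| tyeq_pi: "tyeq S G t s Star A \<Longrightarrow> tyeq S ((t, A) # G) r p Star A \<Longrightarrow> tyeq S G (TPi t r) (TPi s p) Star A"
| tyeq_app: "tyeq S G t s (KPi r K) A \<Longrightarrow> tmeq S G M N r A
            \<Longrightarrow> tyeq S G (TApp t M) (TApp s N) (subst_kind 0 M K) A"
| tyeq_code: "tyeq S G t s Star (A @ [a]) \<Longrightarrow> tyeq S G (TCode a t) (TCode a s) Star A"
| tyeq_all: "tyeq S (sshift_env G) t s Star (map (shv 0) A) \<Longrightarrow> tyeq S G (TAll t) (TAll s) Star A"
| tyeq_stage: "tyeq S G t s Star A \<Longrightarrow> tyeq S G t s Star (A @ [a])"
| tmeq_refl: "typing S G M t A \<Longrightarrow> tmeq S G M M t A"
| tmeq_sym: "tmeq S G M N t A \<Longrightarrow> tmeq S G N M t A"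
| tmeq_trans: "tmeq S G M N t A \<Longrightarrow> tmeq S G N P t A \<Longrightarrow> tmeq S G M P t A"
| tmeq_lam: "tyeq S G t s Star A \<Longrightarrow> tmeq S ((t, A) # G) M N r A
             \<Longrightarrow> tmeq S G (Lam t M) (Lam s N) (TPi t r) A"
| tmeq_app: "tmeq S G M M' (TPi s t) A \<Longrightarrow> tmeq S G N N' s A
             \<Longrightarrow> tmeq S G (App M N) (App M' N') (subst_ty 0 N t) A"
| tmeq_quote: "tmeq S G M N t (A @ [a]) \<Longrightarrow> tmeq S G (Quote a M) (Quote a N) (TCode a t) A"
| tmeq_esc: "tmeq S G M N (TCode a t) A \<Longrightarrow> tmeq S G (Esc a M) (Esc a N) t (A @ [a])"
| tmeq_slam: "tmeq S (sshift_env G) M N t (map (shv 0) A) \<Longrightarrow> tmeq S G (SLam M) (SLam N) (TAll t) A"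
| tmeq_sapp: "tmeq S G M N (TAll t) A \<Longrightarrow> tmeq S G (SApp M B) (SApp N B) (ssubst_ty 0 B t) A"
| tmeq_csp: "tmeq S G M N t A \<Longrightarrow> tmeq S G (CSP a M) (CSP a N) t (A @ [a])"
| tmeq_beta: "typing S ((s, A) # G) M t A \<Longrightarrow> typing S G N s A
              \<Longrightarrow> tmeq S G (App (Lam s M) N) (subst_tm 0 N M) (subst_ty 0 N t) A"
| tmeq_escquote: "tmeq S G M N t A \<Longrightarrow> tmeq S G (Esc a (Quote a M)) N t A"
| tmeq_seps: "typing S G (SLam M) (TAll t) A
              \<Longrightarrow> tmeq S G (SApp (SLam M) []) (ssubst_tm 0 [] M) (ssubst_ty 0 [] t) A"
| tmeq_csp_ax: "typing S G M t (A @ [a]) \<Longrightarrow> typing S G M t A \<Longrightarrow> tmeq S G (CSP a M) M t (A @ [a])"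

primrec sig_dom :: "signature \<Rightarrow> nat set" where
  "sig_dom [] = {}"
| "sig_dom (e # S) = (case e of SConst c t \<Rightarrow> insert c (sig_dom S) | SType X K \<Rightarrow> sig_dom S)"

primrec sig_tdom :: "signature \<Rightarrow> nat set" where
  "sig_tdom [] = {}"
| "sig_tdom (e # S) = (case e of SType X K \<Rightarrow> insert X (sig_tdom S) | SConst c t \<Rightarrow> sig_tdom S)"

fun wf_sig :: "signature \<Rightarrow> bool" where
  "wf_sig [] = True"
| "wf_sig (SType X K # S) = (wf_sig S \<and> kwf S [] K [] \<and> X \<notin> sig_tdom S)"
| "wf_sig (SConst c t # S) = (wf_sig S \<and> kinding S [] t Star [] \<and> c \<notin> sig_dom S)"

fun wf_env :: "signature \<Rightarrow> env \<Rightarrow> bool" where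
  "wf_env S [] = True"
| "wf_env S ((t, A) # G) = (wf_env S G \<and> kinding S G t Star A)"

end

theory Submission imports Defs begin

text \<open>Erasing stages, stage abstractions and type dependencies maps every typed
term of lambda^MD to a term of the simply typed lambda calculus with constants,
and maps a beta step to a beta step.  The remaining steps (stage beta and
escape-of-quote, in any context) leave the erasure unchanged and decrease the
number of stage abstractions, or leave it unchanged and decrease the number
of escapes (a stage substitution may duplicate escapes, hence the
lexicographic order).  So strong normalisation follows from strong
normalisation of the simply typed calculus, proved by Tait's reducibility
method.\<close>

abbreviation SN :: "('a \<Rightarrow> 'a \<Rightarrow> bool) \<Rightarrow> 'a \<Rightarrow> bool" where
  "SN r \<equiv> Wellfounded.accp r\<inverse>\<inverse>"

lemma SN_no_infinite_chain:
  assumes "SN r (f 0)"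
  shows "\<not> (\<forall>i. r (f i) (f (Suc i)))"
proof -
  have "\<not> (\<forall>i. r (f i) (f (Suc i)))" if "SN r x" "f 0 = x" for x f
    using that
  proof (induction arbitrary: f rule: Wellfounded.accp.induct)
    case (accI x)
    show ?case
    proof
      assume chain: "\<forall>i. r (f i) (f (Suc i))"
      have "r\<inverse>\<inverse> (f (Suc 0)) x"
        using chain accI.prems by (metis conversepI)
      moreover have "\<forall>i. r (f (Suc i)) (f (Suc (Suc i)))"
        using chain by blast
      ultimately show False
        using accI.IH[of "f (Suc 0)" "\<lambda>i. f (Suc i)"] by blast
    qed
  qed
  from this[of "f 0" f] assms show ?thesis by simp
qed

lemma accp_via_simulation:
  fixes f :: "'a \<Rightarrow> 'b"
  assumes "wf R"
    and simulation: "\<And>x y. r y x \<Longrightarrow> s (f y) (f x) \<or> f y = f x \<and> (y, x) \<in> R"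
    and "Wellfounded.accp s (f x)"
  shows "Wellfounded.accp r x"
proof -
  have "Wellfounded.accp r x" if "Wellfounded.accp s b" "f x = b" for b x
    using that
  proof (induction arbitrary: x rule: Wellfounded.accp.induct)
    case (accI b)
    from \<open>wf R\<close> show ?case
      using accI.prems
    proof (induction x rule: wf_induct_rule)
      case (less x)
      show ?case
      proof (rule Wellfounded.accp.accI)
        fix y assume "r y x"
        then consider "s (f y) b" | "f y = b" "(y, x) \<in> R"
          using simulation less.prems by blast
        then show "Wellfounded.accp r y"
        proof cases
          case 1
          then show ?thesis using accI.IH by blast
        next
          case 2
          then show ?thesis using less.IH by blast
        qed
      qed
    qed
  qed
  from this[OF assms(3) refl] show ?thesis .
qed

section \<open>Simply typed lambda calculus with constants\<close>

datatype lterm = LConst nat | LVar nat | LAbs lterm | LApp lterm lterm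

datatype stype = Base | Fun stype stype

primrec llift :: "nat \<Rightarrow> nat \<Rightarrow> lterm \<Rightarrow> lterm" where
  "llift d k (LConst c) = LConst c"
| "llift d k (LVar x) = LVar (if x < k then x else x + d)"
| "llift d k (LAbs M) = LAbs (llift d (Suc k) M)"
| "llift d k (LApp M N) = LApp (llift d k M) (llift d k N)"

primrec lsubst :: "nat \<Rightarrow> lterm \<Rightarrow> lterm \<Rightarrow> lterm" where
  "lsubst k N (LConst c) = LConst c"
| "lsubst k N (LVar x) = (if x < k then LVar x else if x = k then llift k 0 N else LVar (x - 1))"
| "lsubst k N (LAbs M) = LAbs (lsubst (Suc k) N M)"
| "lsubst k N (LApp M P) = LApp (lsubst k N M) (lsubst k N P)"

inductive lbeta :: "lterm \<Rightarrow> lterm \<Rightarrow> bool" where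
  lbeta_beta: "lbeta (LApp (LAbs M) N) (lsubst 0 N M)"
| lbeta_abs: "lbeta M M' \<Longrightarrow> lbeta (LAbs M) (LAbs M')"
| lbeta_app1: "lbeta M M' \<Longrightarrow> lbeta (LApp M N) (LApp M' N)"
| lbeta_app2: "lbeta N N' \<Longrightarrow> lbeta (LApp M N) (LApp M N')"

text \<open>Constants may be used at every type: the constants of lambda^MD erase to
constants of arbitrary simple type.\<close>

inductive ltyping :: "stype list \<Rightarrow> lterm \<Rightarrow> stype \<Rightarrow> bool" where
  ltyping_var: "x < length G \<Longrightarrow> ltyping G (LVar x) (G ! x)"
| ltyping_const: "ltyping G (LConst c) T"
| ltyping_abs: "ltyping (T # G) M U \<Longrightarrow> ltyping G (LAbs M) (Fun T U)"
| ltyping_app: "ltyping G M (Fun T U) \<Longrightarrow> ltyping G N T \<Longrightarrow> ltyping G (LApp M N) U"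

lemma llift_0 [simp]: "llift 0 k M = M"
  by (induction M arbitrary: k) auto

lemma llift_llift: "l \<le> i \<Longrightarrow> i \<le> l + k \<Longrightarrow> llift j i (llift k l M) = llift (j + k) l M"
  by (induction M arbitrary: i l) auto

lemma lsubst_llift_cancel: "k \<le> j \<Longrightarrow> j \<le> k + d \<Longrightarrow> lsubst j N (llift (Suc d) k M) = llift d k M"
  by (induction M arbitrary: k j) auto

lemma lsubst_llift: "i \<le> k \<Longrightarrow> lsubst (k + j) N (llift j i M) = llift j i (lsubst k N M)"
proof (induction M arbitrary: i k)
  case (LVar x)
  then show ?case by (auto simp: llift_llift add.commute)
next
  case (LAbs M)
  then show ?case using LAbs.IH[of "Suc i" "Suc k"] by auto
qed auto

lemma lsubst_lsubst:
  "lsubst (k + j) N (lsubst j P M) = lsubst j (lsubst k N P) (lsubst (Suc (k + j)) N M)"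
proof (induction M arbitrary: j)
  case (LVar x)
  consider "x < j" | "x = j" | "j < x" "x < Suc (k + j)" | "x = Suc (k + j)" | "x > Suc (k + j)"
    by linarith
  then show ?case
  proof cases
    case 2
    then show ?thesis using lsubst_llift[of 0 k j N P] by simp
  next
    case 4
    then show ?thesis using lsubst_llift_cancel[of 0 j "k + j" "lsubst k N P" N] by simp
  qed auto
next
  case (LAbs M)
  then show ?case using LAbs.IH[of "Suc j"] by simp
qed auto

lemma lbeta_lsubst: "lbeta M M' \<Longrightarrow> lbeta (lsubst k N M) (lsubst k N M')"
proof (induction arbitrary: k rule: lbeta.induct)
  case (lbeta_beta M P)
  then show ?case
    using lbeta.lbeta_beta[of "lsubst (Suc k) N M" "lsubst k N P"] lsubst_lsubst[of k 0 N P M]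
    by simp
qed (auto intro: lbeta.intros)

lemma SN_LApp_left: "SN lbeta (LApp M N) \<Longrightarrow> SN lbeta M"
  by (rule accp_via_simulation[where R = "{}" and f = "\<lambda>M. LApp M N"]) (auto intro: lbeta_app1)

lemma SN_lsubst: "SN lbeta (lsubst k N M) \<Longrightarrow> SN lbeta M"
  by (rule accp_via_simulation[where R = "{}" and f = "lsubst k N"]) (auto intro: lbeta_lsubst)

section \<open>Reducibility\<close>

definition neutral :: "lterm \<Rightarrow> bool" where
  "neutral M \<longleftrightarrow> (\<forall>P. M \<noteq> LAbs P)"

definition reducibility_candidate :: "(lterm \<Rightarrow> bool) \<Rightarrow> bool" where
  "reducibility_candidate C \<longleftrightarrow>
     (\<forall>M. C M \<longrightarrow> SN lbeta M) \<and>
     (\<forall>M M'. C M \<longrightarrow> lbeta M M' \<longrightarrow> C M') \<and>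
     (\<forall>M. neutral M \<longrightarrow> (\<forall>M'. lbeta M M' \<longrightarrow> C M') \<longrightarrow> C M)"

definition arrow_candidate :: "(lterm \<Rightarrow> bool) \<Rightarrow> (lterm \<Rightarrow> bool) \<Rightarrow> lterm \<Rightarrow> bool" where
  "arrow_candidate C D M \<longleftrightarrow> (\<forall>N. C N \<longrightarrow> D (LApp M N))"

lemma reducibility_candidate_SN: "reducibility_candidate (SN lbeta)"
  unfolding reducibility_candidate_def by (auto intro: Wellfounded.accp.accI accp_downward)

lemma candidate_contains_LVar:
  "reducibility_candidate C \<Longrightarrow> C (LVar x)"
  unfolding reducibility_candidate_def neutral_def by (blast elim: lbeta.cases)

lemma candidate_contains_LConst:
  "reducibility_candidate C \<Longrightarrow> C (LConst c)"
  unfolding reducibility_candidate_def neutral_def by (blast elim: lbeta.cases)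

text \<open>Every reduct of the neutral application is reached by reducing the
function or (by induction on its strong normalisation) the argument.\<close>

lemma arrow_candidate_neutral:
  assumes C: "reducibility_candidate C" and D: "reducibility_candidate D"
    and "neutral M" and reducts: "\<And>M'. lbeta M M' \<Longrightarrow> arrow_candidate C D M'"
  shows "arrow_candidate C D M"
  unfolding arrow_candidate_def
proof (intro allI impI)
  fix N assume "C N"
  then have "SN lbeta N" using C by (simp add: reducibility_candidate_def)
  then show "D (LApp M N)" using \<open>C N\<close>
  proof (induction rule: Wellfounded.accp.induct)
    case (accI N)
    have "D P" if "lbeta (LApp M N) P" for P
      using that
    proof cases
      case (lbeta_app1 M')
      then show ?thesis using reducts \<open>C N\<close> by (simp add: arrow_candidate_def)
    next
      case (lbeta_app2 N')
      then show ?thesis using accI C by (simp add: reducibility_candidate_def)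
    qed (use \<open>neutral M\<close> neutral_def in auto)
    then show ?case using D by (simp add: reducibility_candidate_def neutral_def)
  qed
qed

lemma reducibility_candidate_arrow:
  assumes C: "reducibility_candidate C" and D: "reducibility_candidate D"
  shows "reducibility_candidate (arrow_candidate C D)"
  unfolding reducibility_candidate_def
proof (intro conjI allI impI)
  fix M assume "arrow_candidate C D M"
  then have "D (LApp M (LVar 0))"
    using candidate_contains_LVar[OF C] by (simp add: arrow_candidate_def)
  then show "SN lbeta M"
    using D SN_LApp_left by (auto simp: reducibility_candidate_def)
next
  fix M M' assume "arrow_candidate C D M" "lbeta M M'"
  then show "arrow_candidate C D M'"
    using D lbeta_app1 unfolding arrow_candidate_def reducibility_candidate_def by blast
next
  fix M assume "neutral M" "\<forall>M'. lbeta M M' \<longrightarrow> arrow_candidate C D M'"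
  then show "arrow_candidate C D M" using arrow_candidate_neutral[OF C D] by blast
qed

primrec reducible :: "stype \<Rightarrow> lterm \<Rightarrow> bool" where
  "reducible Base = SN lbeta"
| "reducible (Fun T U) = arrow_candidate (reducible T) (reducible U)"

lemma reducibility_candidate_reducible: "reducibility_candidate (reducible T)"
  by (induction T) (auto intro: reducibility_candidate_SN reducibility_candidate_arrow)

lemma reducible_SN: "reducible T M \<Longrightarrow> SN lbeta M"
  using reducibility_candidate_reducible[of T] unfolding reducibility_candidate_def by blast

lemma reducible_lbeta: "reducible T M \<Longrightarrow> lbeta M M' \<Longrightarrow> reducible T M'"
  using reducibility_candidate_reducible[of T] unfolding reducibility_candidate_def by blast

lemma reducible_neutral: "neutral M \<Longrightarrow> (\<And>M'. lbeta M M' \<Longrightarrow> reducible T M') \<Longrightarrow> reducible T M"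
  using reducibility_candidate_reducible[of T] unfolding reducibility_candidate_def by blast

lemma reducible_LVar: "reducible T (LVar x)"
  by (rule candidate_contains_LVar[OF reducibility_candidate_reducible])

lemma reducible_LConst: "reducible T (LConst c)"
  by (rule candidate_contains_LConst[OF reducibility_candidate_reducible])

lemma reducible_beta_redex:
  assumes "SN lbeta M" "reducible T N"
    and "\<forall>N. reducible T N \<longrightarrow> reducible U (lsubst 0 N M)"
  shows "reducible U (LApp (LAbs M) N)"
  using assms
proof (induction M arbitrary: N rule: Wellfounded.accp.induct)
  case (accI M)
  note outer_IH = accI.IH and body_M = accI.prems(2)
  from reducible_SN[OF \<open>reducible T N\<close>] \<open>reducible T N\<close> show ?case
  proof (induction N rule: Wellfounded.accp.induct)
    case (accI N)
    have "reducible U P" if "lbeta (LApp (LAbs M) N) P" for P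
      using that
    proof cases
      case lbeta_beta
      then show ?thesis using body_M accI.prems by blast
    next
      case (lbeta_app1 M1)
      then obtain M' where "M1 = LAbs M'" and "lbeta M M'"
        by (auto elim: lbeta.cases)
      moreover have "\<forall>N. reducible T N \<longrightarrow> reducible U (lsubst 0 N M')"
        using body_M \<open>lbeta M M'\<close> reducible_lbeta lbeta_lsubst by blast
      ultimately show ?thesis
        using outer_IH[of M' N] lbeta_app1 accI.prems by simp
    next
      case (lbeta_app2 N')
      then show ?thesis using accI.IH accI.prems reducible_lbeta by blast
    qed
    moreover have "neutral (LApp (LAbs M) N)" by (simp add: neutral_def)
    ultimately show ?case using reducible_neutral by blast
  qed
qed

lemma reducible_LAbs:
  assumes "\<And>N. reducible T N \<Longrightarrow> reducible U (lsubst 0 N M)"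
  shows "reducible (Fun T U) (LAbs M)"
proof -
  have "reducible U (lsubst 0 (LVar 0) M)"
    using assms reducible_LVar by blast
  then have "SN lbeta M" using reducible_SN SN_lsubst by blast
  then show ?thesis
    using reducible_beta_redex assms by (auto simp: arrow_candidate_def)
qed

primrec psubst :: "nat \<Rightarrow> (nat \<Rightarrow> lterm) \<Rightarrow> lterm \<Rightarrow> lterm" where
  "psubst n s (LConst c) = LConst c"
| "psubst n s (LVar i) = (if i < n then LVar i else llift n 0 (s (i - n)))"
| "psubst n s (LAbs M) = LAbs (psubst (Suc n) s M)"
| "psubst n s (LApp M N) = LApp (psubst n s M) (psubst n s N)"

lemma lsubst_psubst: "lsubst n N (psubst (Suc n) s M) = psubst n (case_nat N s) M"
proof (induction M arbitrary: n)
  case (LVar i)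
  consider "i < n" | "i = n" | "i > n" by linarith
  then show ?case
  proof cases
    case 3
    then have "i - n = Suc (i - Suc n)" by simp
    then show ?thesis using 3 lsubst_llift_cancel[of 0 n n N "s (i - Suc n)"] by simp
  qed auto
qed auto

lemma psubst_LVar: "psubst n LVar M = M"
  by (induction M arbitrary: n) auto

lemma reducible_psubst:
  "ltyping G M T \<Longrightarrow> (\<forall>i<length G. reducible (G ! i) (s i)) \<Longrightarrow> reducible T (psubst 0 s M)"
proof (induction arbitrary: s rule: ltyping.induct)
  case (ltyping_const G c T)
  show ?case by (simp add: reducible_LConst)
next
  case (ltyping_abs T G M U)
  have "reducible (Fun T U) (LAbs (psubst (Suc 0) s M))"
  proof (rule reducible_LAbs)
    fix N assume "reducible T N"
    then have "\<forall>i<length (T # G). reducible ((T # G) ! i) (case_nat N s i)"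
      using ltyping_abs.prems by (auto split: nat.split)
    then show "reducible U (lsubst 0 N (psubst (Suc 0) s M))"
      using ltyping_abs.IH lsubst_psubst[of 0 N s M] by simp
  qed
  then show ?case by simp
next
  case (ltyping_app G M T U N)
  then show ?case by (simp add: arrow_candidate_def)
qed simp

theorem ltyping_SN:
  assumes "ltyping G M T"
  shows "SN lbeta M"
proof -
  have "reducible T (psubst 0 LVar M)"
    using reducible_psubst[OF assms] reducible_LVar by blast
  then show ?thesis using reducible_SN by (simp add: psubst_LVar)
qed

section \<open>Erasure of lambda^MD\<close>

fun erase_ty :: "ty \<Rightarrow> stype" where
  "erase_ty (TConst X) = Base"
| "erase_ty (TPi t s) = Fun (erase_ty t) (erase_ty s)"
| "erase_ty (TApp t M) = erase_ty t"
| "erase_ty (TCode a t) = erase_ty t"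
| "erase_ty (TAll t) = erase_ty t"

fun erase :: "trm \<Rightarrow> lterm" where
  "erase (Const c) = LConst c"
| "erase (Var x) = LVar x"
| "erase (Lam t M) = LAbs (erase M)"
| "erase (App M N) = LApp (erase M) (erase N)"
| "erase (Quote a M) = erase M"
| "erase (Esc a M) = erase M"
| "erase (SLam M) = erase M"
| "erase (SApp M A) = erase M"
| "erase (CSP a M) = erase M"

abbreviation erase_env :: "env \<Rightarrow> stype list" where
  "erase_env G \<equiv> map (\<lambda>p. erase_ty (fst p)) G"

fun slam_count :: "trm \<Rightarrow> nat" where
  "slam_count (Const c) = 0"
| "slam_count (Var x) = 0"
| "slam_count (Lam t M) = slam_count M"
| "slam_count (App M N) = slam_count M + slam_count N"
| "slam_count (Quote a M) = slam_count M"
| "slam_count (Esc a M) = slam_count M"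
| "slam_count (SLam M) = Suc (slam_count M)"
| "slam_count (SApp M A) = slam_count M"
| "slam_count (CSP a M) = slam_count M"

fun esc_count :: "trm \<Rightarrow> nat" where
  "esc_count (Const c) = 0"
| "esc_count (Var x) = 0"
| "esc_count (Lam t M) = esc_count M"
| "esc_count (App M N) = esc_count M + esc_count N"
| "esc_count (Quote a M) = esc_count M"
| "esc_count (Esc a M) = Suc (esc_count M)"
| "esc_count (SLam M) = esc_count M"
| "esc_count (SApp M A) = esc_count M"
| "esc_count (CSP a M) = esc_count M"

lemma erase_ty_codes [simp]: "erase_ty (codes A t) = erase_ty t"
  by (induction A) (auto simp: codes_def)

lemma erase_quotes [simp]: "erase (quotes A M) = erase M"
  and slam_count_quotes [simp]: "slam_count (quotes A M) = slam_count M"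
  by (induction A) (auto simp: quotes_def)

lemma erase_escs [simp]: "erase (escs A M) = erase M"
  and slam_count_escs [simp]: "slam_count (escs A M) = slam_count M"
  by (induction A arbitrary: M) (auto simp: escs_def)

lemma erase_csps [simp]: "erase (csps A M) = erase M"
  and slam_count_csps [simp]: "slam_count (csps A M) = slam_count M"
  by (induction A arbitrary: M) (auto simp: csps_def)

lemma erase_ty_lift_ty [simp]: "erase_ty (lift_ty d k t) = erase_ty t"
  and erase_lift_tm [simp]: "erase (lift_tm d k M) = llift d k (erase M)"
  by (induction t and M arbitrary: k and k) auto

lemma erase_ty_sshift_ty [simp]: "erase_ty (sshift_ty k t) = erase_ty t"
  and erase_sshift_tm [simp]: "erase (sshift_tm k M) = erase M"
  by (induction t and M arbitrary: k and k) auto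

lemma erase_ty_subst_ty [simp]: "erase_ty (subst_ty k N t) = erase_ty t"
  and erase_subst_tm [simp]: "erase (subst_tm k N M) = lsubst k (erase N) (erase M)"
  by (induction t and M arbitrary: k N and k N) auto

lemma erase_ty_ssubst_ty [simp]: "erase_ty (ssubst_ty k A t) = erase_ty t"
  and erase_ssubst_tm [simp]: "erase (ssubst_tm k A M) = erase M"
  and slam_count_ssubst_tm [simp]: "slam_count (ssubst_tm k A M) = slam_count M"
  by (induction t and M arbitrary: k A and k A) auto

lemma erase_env_sshift_env [simp]: "erase_env (sshift_env G) = erase_env G"
  by (induction G) (auto simp: sshift_env_def)

text \<open>Only the typing and type-equivalence components carry content; the other
judgements are needed because the rule induction is simultaneous.\<close>

lemma typing_erase:
  shows "kwf S G K A \<Longrightarrow> True"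
    and "kinding S G t K A \<Longrightarrow> True"
    and "typing S G M t A \<Longrightarrow> ltyping (erase_env G) (erase M) (erase_ty t)"
    and "keq S G K J A \<Longrightarrow> True"
    and "tyeq S G t s K A \<Longrightarrow> erase_ty t = erase_ty s"
    and "tmeq S G M N t A \<Longrightarrow> True"
proof (induction rule: kwf_kinding_typing_keq_tyeq_tmeq.inducts)
  case (t_var x G t A)
  then show ?case using ltyping_var[of x "erase_env G"] by simp
next
  case (t_lam G s A M t)
  then show ?case using ltyping_abs by fastforce
next
  case (t_app G M s t A N)
  then show ?case using ltyping_app by fastforce
qed (auto intro: ltyping.intros)

lemma red_erase:
  "red M M' \<Longrightarrow> lbeta (erase M) (erase M') \<or>
     erase M' = erase M \<and> (M', M) \<in> measures [slam_count, esc_count]"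
  by (induction rule: red.induct) (auto intro: lbeta.intros)

theorem typing_SN:
  assumes "typing S G M t A"
  shows "SN red M"
proof (rule accp_via_simulation[where R = "measures [slam_count, esc_count]" and f = erase])
  show "SN lbeta (erase M)" using typing_erase(3)[OF assms] by (rule ltyping_SN)
qed (use red_erase in auto)

theorem theorem2:
  assumes "wf_sig S" and "wf_env S G" and "typing S G M1 t A"
  shows "\<not> (\<exists>M :: nat \<Rightarrow> trm. M 1 = M1 \<and> (\<forall>i\<ge>1. red (M i) (M (Suc i))))"
proof
  assume "\<exists>M :: nat \<Rightarrow> trm. M 1 = M1 \<and> (\<forall>i\<ge>1. red (M i) (M (Suc i)))"
  then obtain M :: "nat \<Rightarrow> trm" where "M 1 = M1" and chain: "\<forall>i\<ge>1. red (M i) (M (Suc i))"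
    by blast
  then have "SN red (M (Suc 0))" using typing_SN[OF assms(3)] by simp
  moreover have "\<forall>i. red (M (Suc i)) (M (Suc (Suc i)))" using chain by simp
  ultimately show False using SN_no_infinite_chain[of red "\<lambda>i. M (Suc i)"] by simp
qed

end
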